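(* Let $\mathcal{H}$ be a separable infinite-dimensional complex Hilbert space, let $T\in\mathscr{B}(\mathcal{H})$ have dense range and let $\varepsilon>0$. Then the map $x_0\mapsto\|y_{x_0,\varepsilon}\|$ is continuous on the open set $\{x_0\in\mathcal{H}:\|x_0\|>\varepsilon\}$.
   Context: For $T\in\mathscr{B}(\mathcal{H})$ with dense range, $x_0\neq 0$ and $0<\varepsilon<\|x_0\|$, the extremal vector $y_{x_0,\varepsilon}$ is the unique vector $y_0\in\mathcal{H}$ with $\|Ty_0-x_0\|\leqslant\varepsilon$ and $\|y_0\|=\inf\{\|y\|:\|Ty-x_0\|\leqslant\varepsilon\}$. *)

theory Defs
  imports "HOL-Analysis.Analysis"
begin

text \<open>A complex Hilbert space is modelled as a real Hilbert space (type class
  real_inner + complete_space) together with a complex structure J (multiplication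
  by the imaginary unit): J is real-linear, J (J x) = - x, and J preserves the
  inner product, so that  (a + i b) x = a x + b J x  and the complex inner product
  <x,y>_C = x . y + i (x . J y)  (up to convention).\<close>

definition complex_structure :: "('a::real_inner \<Rightarrow> 'a) \<Rightarrow> bool" where
  "complex_structure J \<longleftrightarrow> linear J \<and> (\<forall>x. J (J x) = - x) \<and> (\<forall>x y. inner (J x) (J y) = inner x y)"

definition complex_bounded_operator :: "('a::real_inner \<Rightarrow> 'a) \<Rightarrow> ('a \<Rightarrow> 'a) \<Rightarrow> bool" where
  "complex_bounded_operator J T \<longleftrightarrow> bounded_linear T \<and> (\<forall>x. T (J x) = J (T x))"

text \<open>Infinite-dimensional: no finite set spans the whole space (real span; the
  space is infinite-dimensional over the complex numbers iff over the reals).\<close>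
definition infinite_dimensional :: "'a::real_vector itself \<Rightarrow> bool" where
  "infinite_dimensional _ \<longleftrightarrow> (\<forall>S::'a set. finite S \<longrightarrow> span S \<noteq> UNIV)"

definition extremal_vector :: "('a::real_normed_vector \<Rightarrow> 'a) \<Rightarrow> 'a \<Rightarrow> real \<Rightarrow> 'a" where
  "extremal_vector T x0 \<epsilon> =
     (THE y0. norm (T y0 - x0) \<le> \<epsilon> \<and> norm y0 = Inf {norm y | y. norm (T y - x0) \<le> \<epsilon>})"

end

theory Submission
  imports Defs
begin

(* The norm of the extremal vector is m x = Inf {norm y | y. norm (T y - x) \<le> \<epsilon>}, attained
   at a unique point because the constraint set is a nonempty closed convex subset of a Hilbert
   space.  The constraint is jointly convex in (x, y), so m is a convex function of x; and dense
   range gives a y with norm (T y - x) < \<epsilon>/2, which bounds m by norm y on the ball of radius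
   \<epsilon>/2 about x.  A convex function that is locally bounded above is continuous. *)

lemma parallelogram_law:
  fixes x y :: "'a::real_inner"
  shows "norm (x + y)^2 + norm (x - y)^2 = 2 * norm x^2 + 2 * norm y^2"
  by (simp add: power2_norm_eq_inner inner_add_left inner_add_right
      inner_diff_left inner_diff_right inner_commute)

lemma min_norm_point_exists:
  fixes C :: "'a::{real_inner, complete_space} set"
  assumes "closed C" and "convex C" and "C \<noteq> {}"
  obtains y where "y \<in> C" and "\<And>z. z \<in> C \<Longrightarrow> norm y \<le> norm z"
proof -
  define d where "d = Inf (norm ` C)"
  have bdd: "bdd_below (norm ` C)"
    by (rule bdd_belowI[of _ 0]) auto
  have d_le: "d \<le> norm z" if "z \<in> C" for z
    unfolding d_def using bdd that by (intro cInf_lower) auto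
  have "d \<ge> 0"
    unfolding d_def using \<open>C \<noteq> {}\<close> by (intro cInf_greatest) auto
  have "d \<in> closure (norm ` C)"
    unfolding d_def using \<open>C \<noteq> {}\<close> bdd by (intro closure_contains_Inf) auto
  then obtain f where f: "\<And>n. f n \<in> norm ` C" and "f \<longlonglongrightarrow> d"
    unfolding closure_sequential by blast
  have "\<forall>n. \<exists>z. z \<in> C \<and> f n = norm z"
    using f by blast
  then obtain y where y: "\<And>n. y n \<in> C \<and> f n = norm (y n)"
    by metis
  then have yC: "\<And>n. y n \<in> C" and "(\<lambda>n. norm (y n)) = f"
    by auto
  with \<open>f \<longlonglongrightarrow> d\<close> have lim: "(\<lambda>n. norm (y n)) \<longlonglongrightarrow> d"
    by simp
  have sum_ge: "4 * d^2 \<le> norm (y i + y j)^2" for i j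
  proof -
    have "(1/2) *\<^sub>R (y i + y j) \<in> C"
      using convexD_alt[OF \<open>convex C\<close> yC yC, of "1/2"] by (simp add: scaleR_add_right)
    then have "d \<le> norm (y i + y j) / 2"
      using d_le by fastforce
    then show ?thesis
      using \<open>d \<ge> 0\<close> power_mono[of "2 * d" "norm (y i + y j)" 2] by (simp add: power_mult_distrib)
  qed
  have "Cauchy y"
  proof (rule metric_CauchyI)
    fix e :: real
    assume "e > 0"
    have "(\<lambda>n. norm (y n)^2) \<longlonglongrightarrow> d^2"
      by (intro tendsto_intros lim)
    then have "\<forall>\<^sub>F n in sequentially. norm (y n)^2 < d^2 + e^2 / 4"
      using \<open>e > 0\<close> by (intro order_tendstoD) auto
    then obtain N where N: "\<And>n. N \<le> n \<Longrightarrow> norm (y n)^2 < d^2 + e^2 / 4"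
      unfolding eventually_sequentially by blast
    have "dist (y i) (y j) < e" if "N \<le> i" "N \<le> j" for i j
    proof -
      have "norm (y i - y j)^2 = 2 * norm (y i)^2 + 2 * norm (y j)^2 - norm (y i + y j)^2"
        using parallelogram_law[of "y i" "y j"] by simp
      also have "\<dots> < e^2"
        using N[OF that(1)] N[OF that(2)] sum_ge[of i j] by simp
      finally show ?thesis
        using \<open>e > 0\<close> by (simp add: dist_norm power_less_imp_less_base)
    qed
    then show "\<exists>M. \<forall>i\<ge>M. \<forall>j\<ge>M. dist (y i) (y j) < e"
      by blast
  qed
  then obtain L where L: "y \<longlonglongrightarrow> L"
    using Cauchy_convergent_iff convergent_def by blast
  have "L \<in> C"
    using closed_sequentially[OF \<open>closed C\<close>] yC L by blast
  moreover have "norm L = d"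
    using LIMSEQ_unique[OF tendsto_norm[OF L] lim] .
  ultimately show ?thesis
    using that d_le by metis
qed

definition min_norm_point :: "'a::real_normed_vector set \<Rightarrow> 'a" where
  "min_norm_point C = (THE y. y \<in> C \<and> norm y = Inf (norm ` C))"

lemma min_norm_point:
  fixes C :: "'a::{real_inner, complete_space} set"
  assumes "closed C" and "convex C" and "C \<noteq> {}"
  shows min_norm_point_in: "min_norm_point C \<in> C"
    and min_norm_point_le: "z \<in> C \<Longrightarrow> norm (min_norm_point C) \<le> norm z"
proof -
  obtain y where "y \<in> C" and y_min: "\<And>z. z \<in> C \<Longrightarrow> norm y \<le> norm z"
    using min_norm_point_exists[OF assms] by blast
  then have "Inf (norm ` C) = norm y"
    by (intro cInf_eq_minimum) auto
  moreover have "y' = y" if "y' \<in> C" "norm y' = norm y" for y'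
    using any_closest_point_unique[OF \<open>convex C\<close> \<open>closed C\<close> that(1) \<open>y \<in> C\<close>, of 0]
      that(2) y_min by simp
  ultimately have "min_norm_point C = y"
    unfolding min_norm_point_def using \<open>y \<in> C\<close> by (intro the_equality) auto
  with \<open>y \<in> C\<close> y_min show "min_norm_point C \<in> C" "z \<in> C \<Longrightarrow> norm (min_norm_point C) \<le> norm z"
    by auto
qed

lemma extremal_vector_eq_min_norm_point:
  "extremal_vector T x \<epsilon> = min_norm_point {y. norm (T y - x) \<le> \<epsilon>}"
proof -
  have "{norm y | y. norm (T y - x) \<le> \<epsilon>} = norm ` {y. norm (T y - x) \<le> \<epsilon>}"
    by auto
  then show ?thesis
    unfolding extremal_vector_def min_norm_point_def by simp
qed

lemma dense_range_approx:
  assumes "closure (range T) = UNIV" and "e > 0"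
  obtains y where "norm (T y - x) < e"
  using closure_approachable[of x "range T"] assms by (auto simp: dist_norm)

lemma residual_convex_combination:
  assumes "linear T" and "0 \<le> u" and "0 \<le> v" and "u + v = 1"
    and "norm (T a - p) \<le> \<epsilon>" and "norm (T b - q) \<le> \<epsilon>"
  shows "norm (T (u *\<^sub>R a + v *\<^sub>R b) - (u *\<^sub>R p + v *\<^sub>R q)) \<le> \<epsilon>"
proof -
  have "T (u *\<^sub>R a + v *\<^sub>R b) - (u *\<^sub>R p + v *\<^sub>R q) = u *\<^sub>R (T a - p) + v *\<^sub>R (T b - q)"
    by (simp add: linear_add[OF assms(1)] linear_scale[OF assms(1)] algebra_simps)
  then have "norm (T (u *\<^sub>R a + v *\<^sub>R b) - (u *\<^sub>R p + v *\<^sub>R q)) \<le> u * norm (T a - p) + v * norm (T b - q)"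
    using norm_triangle_ineq[of "u *\<^sub>R (T a - p)" "v *\<^sub>R (T b - q)"] assms(2,3) by simp
  also have "\<dots> \<le> u * \<epsilon> + v * \<epsilon>"
    using assms(2,3,5,6) by (intro add_mono mult_left_mono)
  also have "\<dots> = \<epsilon>"
    using assms(4) by (metis distrib_right mult_1)
  finally show ?thesis .
qed

context
  fixes T :: "'a::{real_inner, complete_space} \<Rightarrow> 'a" and \<epsilon> :: real
  assumes T: "bounded_linear T"
    and dense: "closure (range T) = UNIV"
    and \<epsilon>: "\<epsilon> > 0"
begin

lemma extremal_vector:
  shows extremal_vector_feasible: "norm (T (extremal_vector T x \<epsilon>) - x) \<le> \<epsilon>"
    and extremal_vector_le: "norm (T y - x) \<le> \<epsilon> \<Longrightarrow> norm (extremal_vector T x \<epsilon>) \<le> norm y"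
proof -
  let ?C = "{y. norm (T y - x) \<le> \<epsilon>}"
  have "closed ?C"
    by (intro closed_Collect_le continuous_intros linear_continuous_on T)
  moreover have "convex ?C"
  proof (rule convexI)
    fix a b and u v :: real
    assume "a \<in> ?C" "b \<in> ?C" "0 \<le> u" "0 \<le> v" "u + v = 1"
    then have "norm (T (u *\<^sub>R a + v *\<^sub>R b) - (u *\<^sub>R x + v *\<^sub>R x)) \<le> \<epsilon>"
      by (intro residual_convex_combination bounded_linear.linear[OF T]) auto
    moreover have "u *\<^sub>R x + v *\<^sub>R x = x"
      using \<open>u + v = 1\<close> by (metis scaleR_add_left scaleR_one)
    ultimately show "u *\<^sub>R a + v *\<^sub>R b \<in> ?C"
      by simp
  qed
  moreover obtain y0 where "norm (T y0 - x) < \<epsilon>"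
    using dense_range_approx[OF dense \<epsilon>] .
  then have "?C \<noteq> {}"
    by (metis empty_iff less_imp_le mem_Collect_eq)
  ultimately show "norm (T (extremal_vector T x \<epsilon>) - x) \<le> \<epsilon>"
    and "norm (T y - x) \<le> \<epsilon> \<Longrightarrow> norm (extremal_vector T x \<epsilon>) \<le> norm y"
    using min_norm_point[of ?C] by (auto simp: extremal_vector_eq_min_norm_point)
qed

lemma convex_on_norm_extremal_vector: "convex_on UNIV (\<lambda>x. norm (extremal_vector T x \<epsilon>))"
proof (rule convex_onI)
  fix t :: real and a b :: 'a
  assume "0 < t" "t < 1"
  let ?y = "(1 - t) *\<^sub>R extremal_vector T a \<epsilon> + t *\<^sub>R extremal_vector T b \<epsilon>"
  have "norm (T ?y - ((1 - t) *\<^sub>R a + t *\<^sub>R b)) \<le> \<epsilon>"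
    using \<open>0 < t\<close> \<open>t < 1\<close>
    by (intro residual_convex_combination bounded_linear.linear[OF T] extremal_vector_feasible) auto
  then have "norm (extremal_vector T ((1 - t) *\<^sub>R a + t *\<^sub>R b) \<epsilon>) \<le> norm ?y"
    by (rule extremal_vector_le)
  also have "\<dots> \<le> (1 - t) * norm (extremal_vector T a \<epsilon>) + t * norm (extremal_vector T b \<epsilon>)"
    using norm_triangle_ineq[of "(1 - t) *\<^sub>R extremal_vector T a \<epsilon>" "t *\<^sub>R extremal_vector T b \<epsilon>"]
      \<open>0 < t\<close> \<open>t < 1\<close> by simp
  finally show "norm (extremal_vector T ((1 - t) *\<^sub>R a + t *\<^sub>R b) \<epsilon>)
      \<le> (1 - t) * norm (extremal_vector T a \<epsilon>) + t * norm (extremal_vector T b \<epsilon>)" .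
qed simp

lemma norm_extremal_vector_locally_bounded:
  obtains B where "\<And>z. z \<in> ball x (\<epsilon> / 2) \<Longrightarrow> norm (extremal_vector T z \<epsilon>) \<le> B"
proof -
  obtain y where y: "norm (T y - x) < \<epsilon> / 2"
    using dense_range_approx[OF dense] \<epsilon> by (metis half_gt_zero)
  have "norm (extremal_vector T z \<epsilon>) \<le> norm y" if "z \<in> ball x (\<epsilon> / 2)" for z
  proof (rule extremal_vector_le)
    have "norm (T y - z) \<le> norm (T y - x) + norm (x - z)"
      using norm_triangle_ineq[of "T y - x" "x - z"] by simp
    then show "norm (T y - z) \<le> \<epsilon>"
      using y that by (simp add: dist_norm)
  qed
  then show ?thesis
    using that by blast
qed

lemma continuous_on_norm_extremal_vector: "continuous_on UNIV (\<lambda>x. norm (extremal_vector T x \<epsilon>))"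
proof -
  have "isCont (\<lambda>x. norm (extremal_vector T x \<epsilon>)) x" for x
  proof -
    obtain B where B: "\<And>z. z \<in> ball x (\<epsilon> / 2) \<Longrightarrow> norm (extremal_vector T z \<epsilon>) \<le> B"
      using norm_extremal_vector_locally_bounded[where x = x] by blast
    have "continuous_on (ball x (\<epsilon> / 2)) (\<lambda>x. norm (extremal_vector T x \<epsilon>))"
      using convex_on_subset[OF convex_on_norm_extremal_vector] B
      by (intro convex_on_bounded_continuous[where b = B]) auto
    then show ?thesis
      using \<epsilon> by (simp add: continuous_on_eq_continuous_at)
  qed
  then show ?thesis
    by (simp add: continuous_at_imp_continuous_on)
qed

end

theorem mainTheorem7:
  fixes J T :: "'a::{real_inner, complete_space} \<Rightarrow> 'a" and \<epsilon> :: real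
  assumes "complex_structure J"
    and "separable_space (euclidean :: 'a topology)"
    and "infinite_dimensional TYPE('a)"
    and "complex_bounded_operator J T"
    and "closure (range T) = UNIV"
    and "\<epsilon> > 0"
  shows "continuous_on {x0. norm x0 > \<epsilon>} (\<lambda>x0. norm (extremal_vector T x0 \<epsilon>))"
proof -
  have "bounded_linear T"
    using \<open>complex_bounded_operator J T\<close> unfolding complex_bounded_operator_def by blast
  from continuous_on_norm_extremal_vector[OF this assms(5,6)] show ?thesis
    by (rule continuous_on_subset) simp
qed

end
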